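(* Let $N>0$, $m>0$, $F>0$, $\alpha>0$, $w>0$ be fixed with $Nm>\alpha$, and for $g\geq 0$, $\tau\in(0,1)$, $L_g\geq 0$ define \[ L=\frac{N\left[(1-\tau)(mL_g+\alpha F)+(mg+F)mN\right]}{\alpha+(Nm-\alpha)\tau},\qquad q=\frac{(1-\tau)(L+L_g-\alpha g)}{\left(Nm+\alpha(1-\tau)\right)(L+L_g)}, \] \[ p=\frac{L+L_g}{L+L_g-\alpha g}\left(mw+\frac{\alpha(1-\tau)w}{N}\right),\qquad \Pi=\left((L+L_g)q+g\right)(p-mw)-Fw, \] regarded as functions of $(g,\tau,L_g)$. Then \[ \frac{\partial \Pi}{\partial g}>0,\qquad \frac{\partial \Pi}{\partial \tau}<0 . \]
   Context: These are the symmetric-equilibrium private employment $L$, per-capita consumption $q$ of each variety, price $p$, and profit $\Pi$ of each firm in a monopolistic-competition general equilibrium model with a measure $N$ of firms, marginal and fixed labor inputs $m$ and $F$, CARA utility parameter $\alpha$, nominal wage $w$, income tax rate $\tau$, government purchase $g$ of each variety, and government employment $L_g$. Partial derivatives are taken in $(g,\tau,L_g)$ with other parameters fixed. *)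

theory Defs
  imports Complex_Main
begin

definition Lpriv :: "real \<Rightarrow> real \<Rightarrow> real \<Rightarrow> real \<Rightarrow> real \<Rightarrow> real \<Rightarrow> real \<Rightarrow> real" where
  "Lpriv N m F \<alpha> g \<tau> Lg =
     N * ((1 - \<tau>) * (m * Lg + \<alpha> * F) + (m * g + F) * m * N) / (\<alpha> + (N * m - \<alpha>) * \<tau>)"

definition qcons :: "real \<Rightarrow> real \<Rightarrow> real \<Rightarrow> real \<Rightarrow> real \<Rightarrow> real \<Rightarrow> real \<Rightarrow> real" where
  "qcons N m F \<alpha> g \<tau> Lg =
     (let L = Lpriv N m F \<alpha> g \<tau> Lg in
      (1 - \<tau>) * (L + Lg - \<alpha> * g) / ((N * m + \<alpha> * (1 - \<tau>)) * (L + Lg)))"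

definition price :: "real \<Rightarrow> real \<Rightarrow> real \<Rightarrow> real \<Rightarrow> real \<Rightarrow> real \<Rightarrow> real \<Rightarrow> real \<Rightarrow> real" where
  "price N m F \<alpha> w g \<tau> Lg =
     (let L = Lpriv N m F \<alpha> g \<tau> Lg in
      (L + Lg) / (L + Lg - \<alpha> * g) * (m * w + \<alpha> * (1 - \<tau>) * w / N))"

definition profit :: "real \<Rightarrow> real \<Rightarrow> real \<Rightarrow> real \<Rightarrow> real \<Rightarrow> real \<Rightarrow> real \<Rightarrow> real \<Rightarrow> real" where
  "profit N m F \<alpha> w g \<tau> Lg =
     (let L = Lpriv N m F \<alpha> g \<tau> Lg in
      ((L + Lg) * qcons N m F \<alpha> g \<tau> Lg + g) * (price N m F \<alpha> w g \<tau> Lg - m * w) - F * w)"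

end

theory Submission
  imports Defs
begin

(* With C = L_g + N F, eliminating L turns the profit into
     Pi = alpha w A^2 / (N D B) - F w,
   where A = (1 - tau) C + N m g, B = C + (N m - alpha) g and D = alpha + (N m - alpha) tau
   are affine in g and in tau.  In g, Pi is a positive multiple of A^2 / B, whose derivative
   A (2 N m B - (N m - alpha) A) / B^2 is positive because (1 - tau) (N m - alpha) < 2 N m.
   In tau, Pi is a positive multiple of A^2 / D, where A decreases and D increases. *)

lemma profit_closed_form:
  fixes N m F \<alpha> w g \<tau> Lg :: real
  defines "C \<equiv> Lg + N * F"
  assumes "N \<noteq> 0" "\<alpha> + (N * m - \<alpha>) * \<tau> \<noteq> 0" "N * m + \<alpha> * (1 - \<tau>) \<noteq> 0"
    and "C + (N * m - \<alpha>) * g \<noteq> 0" "(N * m + \<alpha> * (1 - \<tau>)) * C + (N * m)^2 * g \<noteq> 0"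
  shows "profit N m F \<alpha> w g \<tau> Lg =
    \<alpha> * w / N * ((1 - \<tau>) * C + N * m * g)^2 / ((\<alpha> + (N * m - \<alpha>) * \<tau>) * (C + (N * m - \<alpha>) * g)) - F * w"
proof -
  define D where "D = \<alpha> + (N * m - \<alpha>) * \<tau>"
  define K where "K = N * m + \<alpha> * (1 - \<tau>)"
  define A where "A = (1 - \<tau>) * C + N * m * g"
  define B where "B = C + (N * m - \<alpha>) * g"
  define S where "S = Lpriv N m F \<alpha> g \<tau> Lg + Lg"
  have S: "S = (K * C + (N * m)^2 * g) / D"
    using assms(3) unfolding S_def Lpriv_def K_def D_def C_def
    by (simp add: field_simps power2_eq_square)
  have S_minus: "S - \<alpha> * g = K * B / D"
    using assms(3) unfolding S K_def D_def B_def by (simp add: field_simps power2_eq_square)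
  have A: "(1 - \<tau>) * S + N * m * g = K * A / D"
    using assms(3) unfolding S K_def D_def A_def by (simp add: field_simps power2_eq_square)
  have "S \<noteq> 0"
    using assms(3,6) unfolding S K_def D_def by simp
  have "S - \<alpha> * g \<noteq> 0"
    using assms(3-5) unfolding S_minus K_def D_def B_def by simp
  have demand: "S * qcons N m F \<alpha> g \<tau> Lg + g = ((1 - \<tau>) * S + N * m * g) / K"
    using \<open>S \<noteq> 0\<close> assms(4) unfolding qcons_def Let_def S_def[symmetric] K_def[symmetric]
    by (simp add: field_simps) (simp add: K_def algebra_simps)
  have markup: "price N m F \<alpha> w g \<tau> Lg - m * w = \<alpha> * w * ((1 - \<tau>) * S + N * m * g) / (N * (S - \<alpha> * g))"
    using \<open>S - \<alpha> * g \<noteq> 0\<close> assms(2) unfolding price_def Let_def S_def[symmetric]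
    by (simp add: field_simps)
  have "profit N m F \<alpha> w g \<tau> Lg = (S * qcons N m F \<alpha> g \<tau> Lg + g) * (price N m F \<alpha> w g \<tau> Lg - m * w) - F * w"
    unfolding profit_def Let_def S_def ..
  also have "\<dots> = \<alpha> * w / N * A^2 / (D * B) - F * w"
    using assms(2-5) unfolding demand markup A S_minus K_def[symmetric] D_def[symmetric] B_def[symmetric]
    by (simp add: field_simps power2_eq_square)
  finally show ?thesis unfolding A_def B_def D_def .
qed

lemma DERIV_square_divide:
  fixes f h :: "real \<Rightarrow> real"
  assumes "(f has_real_derivative f') (at x)" "(h has_real_derivative h') (at x)" "h x \<noteq> 0"
  shows "((\<lambda>x. f x ^ 2 / h x) has_real_derivative f x * (2 * f' * h x - h' * f x) / h x ^ 2) (at x)"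
  using assms by (auto intro!: derivative_eq_intros simp: field_simps power2_eq_square)

lemma profit_deriv_pos_in_purchase:
  fixes N m F \<alpha> w g \<tau> Lg :: real
  assumes "N > 0" "m > 0" "F > 0" "\<alpha> > 0" "w > 0" "N * m > \<alpha>"
    and "g \<ge> 0" "0 < \<tau>" "\<tau> < 1" "Lg \<ge> 0"
  shows "\<exists>D. ((\<lambda>x. profit N m F \<alpha> w x \<tau> Lg) has_real_derivative D) (at g) \<and> D > 0"
proof -
  define C where "C = Lg + N * F"
  define D where "D = \<alpha> + (N * m - \<alpha>) * \<tau>"
  define K where "K = N * m + \<alpha> * (1 - \<tau>)"
  define A where "A x = (1 - \<tau>) * C + N * m * x" for x
  define B where "B x = C + (N * m - \<alpha>) * x" for x
  define U where "U = {x. B x \<noteq> 0 \<and> K * C + (N * m)^2 * x \<noteq> 0}"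
  have "C > 0" "D > 0" "K > 0"
    using assms unfolding C_def D_def K_def by (auto intro: add_nonneg_pos add_pos_nonneg)
  have "A g > 0" "B g > 0"
    using assms \<open>C > 0\<close> unfolding A_def B_def by (auto intro: add_pos_nonneg)
  have "open U"
    unfolding U_def B_def by (intro open_Collect_conj open_Collect_neq continuous_intros)
  have "K * C + (N * m)^2 * g > 0"
    using \<open>C > 0\<close> \<open>K > 0\<close> assms(7) by (simp add: add_pos_nonneg)
  then have "g \<in> U"
    using \<open>B g > 0\<close> unfolding U_def by simp
  have closed_form: "profit N m F \<alpha> w x \<tau> Lg = \<alpha> * w / (N * D) * (A x ^ 2 / B x) - F * w" if "x \<in> U" for x
    using that \<open>D > 0\<close> \<open>K > 0\<close> assms(1) profit_closed_form[of N \<alpha> m \<tau> Lg F x w]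
    unfolding U_def A_def B_def C_def D_def K_def by (simp add: ac_simps)
  define P' where "P' = \<alpha> * w / (N * D) * (A g * (2 * (N * m) * B g - (N * m - \<alpha>) * A g) / B g ^ 2)"
  have "((\<lambda>x. A x ^ 2 / B x) has_real_derivative
      A g * (2 * (N * m) * B g - (N * m - \<alpha>) * A g) / B g ^ 2) (at g)"
    using \<open>B g > 0\<close>
    by (intro DERIV_square_divide) (auto simp: A_def B_def intro!: derivative_eq_intros)
  then have "((\<lambda>x. \<alpha> * w / (N * D) * (A x ^ 2 / B x) - F * w) has_real_derivative P') (at g)"
    unfolding P'_def by (rule DERIV_diff[OF DERIV_cmult DERIV_const, simplified])
  then have "((\<lambda>x. profit N m F \<alpha> w x \<tau> Lg) has_real_derivative P') (at g)"
    by (rule has_field_derivative_transform_within_open[OF _ \<open>open U\<close> \<open>g \<in> U\<close>])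
       (simp add: closed_form)
  moreover have "2 * (N * m) * B g - (N * m - \<alpha>) * A g > 0"
  proof -
    have "(1 - \<tau>) * (N * m - \<alpha>) \<le> N * m - \<alpha>"
      using assms by (intro mult_left_le_one_le) auto
    then have "2 * (N * m) - (1 - \<tau>) * (N * m - \<alpha>) > 0"
      using assms by linarith
    then have "C * (2 * (N * m) - (1 - \<tau>) * (N * m - \<alpha>)) + N * m * (N * m - \<alpha>) * g > 0"
      using assms \<open>C > 0\<close> by (intro add_pos_nonneg) auto
    then show ?thesis
      unfolding A_def B_def by (simp add: algebra_simps)
  qed
  then have "P' > 0"
    unfolding P'_def using assms \<open>D > 0\<close> \<open>A g > 0\<close> \<open>B g > 0\<close> by simp
  ultimately show ?thesis by blast
qed

lemma profit_deriv_neg_in_tax_rate: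
  fixes N m F \<alpha> w g \<tau> Lg :: real
  assumes "N > 0" "m > 0" "F > 0" "\<alpha> > 0" "w > 0" "N * m > \<alpha>"
    and "g \<ge> 0" "0 < \<tau>" "\<tau> < 1" "Lg \<ge> 0"
  shows "\<exists>D. ((\<lambda>t. profit N m F \<alpha> w g t Lg) has_real_derivative D) (at \<tau>) \<and> D < 0"
proof -
  define C where "C = Lg + N * F"
  define D where "D t = \<alpha> + (N * m - \<alpha>) * t" for t
  define K where "K t = N * m + \<alpha> * (1 - t)" for t
  define A where "A t = (1 - t) * C + N * m * g" for t
  define B where "B = C + (N * m - \<alpha>) * g"
  define V where "V = {t. D t \<noteq> 0 \<and> K t \<noteq> 0 \<and> K t * C + (N * m)^2 * g \<noteq> 0}"
  have "C > 0"
    using assms unfolding C_def by (auto intro: add_nonneg_pos)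
  have "A \<tau> > 0" "B > 0" "D \<tau> > 0" "K \<tau> > 0"
    using assms \<open>C > 0\<close> unfolding A_def B_def D_def K_def by (auto intro: add_pos_nonneg)
  have "open V"
    unfolding V_def D_def K_def by (intro open_Collect_conj open_Collect_neq continuous_intros)
  have "K \<tau> * C + (N * m)^2 * g > 0"
    using \<open>C > 0\<close> \<open>K \<tau> > 0\<close> assms(7) by (simp add: add_pos_nonneg)
  then have "\<tau> \<in> V"
    using \<open>D \<tau> > 0\<close> \<open>K \<tau> > 0\<close> unfolding V_def by simp
  have closed_form: "profit N m F \<alpha> w g t Lg = \<alpha> * w / (N * B) * (A t ^ 2 / D t) - F * w" if "t \<in> V" for t
    using that \<open>B > 0\<close> assms(1) profit_closed_form[of N \<alpha> m t Lg F g w]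
    unfolding V_def A_def B_def C_def D_def K_def by (simp add: ac_simps)
  define P' where "P' = \<alpha> * w / (N * B) * (A \<tau> * (2 * (- C) * D \<tau> - (N * m - \<alpha>) * A \<tau>) / D \<tau> ^ 2)"
  have "((\<lambda>t. A t ^ 2 / D t) has_real_derivative
      A \<tau> * (2 * (- C) * D \<tau> - (N * m - \<alpha>) * A \<tau>) / D \<tau> ^ 2) (at \<tau>)"
    using \<open>D \<tau> > 0\<close>
    by (intro DERIV_square_divide) (auto simp: A_def D_def intro!: derivative_eq_intros)
  then have "((\<lambda>t. \<alpha> * w / (N * B) * (A t ^ 2 / D t) - F * w) has_real_derivative P') (at \<tau>)"
    unfolding P'_def by (rule DERIV_diff[OF DERIV_cmult DERIV_const, simplified])
  then have "((\<lambda>t. profit N m F \<alpha> w g t Lg) has_real_derivative P') (at \<tau>)"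
    by (rule has_field_derivative_transform_within_open[OF _ \<open>open V\<close> \<open>\<tau> \<in> V\<close>])
       (simp add: closed_form)
  moreover have "2 * (- C) * D \<tau> - (N * m - \<alpha>) * A \<tau> < 0"
  proof -
    have "C * D \<tau> > 0" "(N * m - \<alpha>) * A \<tau> > 0"
      using assms \<open>C > 0\<close> \<open>D \<tau> > 0\<close> \<open>A \<tau> > 0\<close> by simp_all
    then show ?thesis by linarith
  qed
  then have "P' < 0"
    unfolding P'_def using assms \<open>B > 0\<close> \<open>A \<tau> > 0\<close> \<open>D \<tau> > 0\<close>
    by (simp add: mult_pos_neg divide_neg_pos)
  ultimately show ?thesis by blast
qed

theorem theorem4:
  fixes N m F \<alpha> w g \<tau> Lg :: real
  assumes "N > 0" "m > 0" "F > 0" "\<alpha> > 0" "w > 0" "N * m > \<alpha>"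
    and "g \<ge> 0" "0 < \<tau>" "\<tau> < 1" "Lg \<ge> 0"
  shows "(\<exists>D. ((\<lambda>x. profit N m F \<alpha> w x \<tau> Lg) has_real_derivative D) (at g) \<and> D > 0)
       \<and> (\<exists>D. ((\<lambda>t. profit N m F \<alpha> w g t Lg) has_real_derivative D) (at \<tau>) \<and> D < 0)"
  using profit_deriv_pos_in_purchase[OF assms] profit_deriv_neg_in_tax_rate[OF assms] by blast

end
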